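(* Let $\nu>-1$. Then there exist constants $C,c>0$ such that $$|\partial_tp_t^\nu(x,y)|\le \frac{C}{t^{3/2}}\exp\Big(-\frac{|x-y|^2}{ct}\Big)\Big(1+\frac{\sqrt t}{x}\Big)^{\gamma_\nu}\Big(1+\frac{\sqrt t}{y}\Big)^{\gamma_\nu}$$ for all $t>0$ and $x,y\in(0,\infty)$.
   Context: For $\nu>-1$, $p_t^\nu(x,y)$ is the integral kernel of $e^{-t\mathcal L_\nu}$, where $\mathcal L_\nu$ is the one-dimensional Laguerre operator on $(0,\infty)$ (eigenfunctions the Laguerre functions $\varphi_k^\nu$, eigenvalues $4k+2\nu+2$); explicitly, with $r=e^{-4t}$, $p_t^\nu(x,y)=\frac{2(rxy)^{1/2}}{1-r}\exp\big(-\frac12\frac{1+r}{1-r}(x^2+y^2)\big)I_\nu\big(\frac{2r^{1/2}}{1-r}xy\big)$, $I_\nu$ the modified Bessel function of the first kind. $\gamma_\nu=-1/2-\nu$ if $-1<\nu<-1/2$ and $\gamma_\nu=0$ if $\nu\ge-1/2$. *)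

theory Defs
  imports "HOL-Analysis.Analysis"
begin

definition besselI :: "real \<Rightarrow> real \<Rightarrow> real" where
  "besselI nu z = (\<Sum>k. (z / 2) powr (2 * real k + nu) / (fact k * Gamma (real k + nu + 1)))"

definition laguerre_heat_kernel :: "real \<Rightarrow> real \<Rightarrow> real \<Rightarrow> real \<Rightarrow> real" where
  "laguerre_heat_kernel nu t x y =
     (let r = exp (-4 * t) in
       2 * sqrt (r * x * y) / (1 - r)
       * exp (- (1/2) * ((1 + r) / (1 - r)) * (x^2 + y^2))
       * besselI nu (2 * sqrt r / (1 - r) * x * y))"

definition gamma_nu :: "real \<Rightarrow> real" where
  "gamma_nu nu = (if nu < -1/2 then -1/2 - nu else 0)"

end

theory Submission
  imports Defs
begin

text \<open>
  Write S = sinh 2t, C = cosh 2t and z = xy/S. Then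
  p_t(x,y) = sqrt z I_nu(z) exp(-C(x^2+y^2)/(2S)) / sqrt S and
  d/dt p_t(x,y) = p_t(x,y) ((x^2+y^2)/S^2 - (2C/S)(nu + 1 + z psi(z))), where psi = I_(nu+1)/I_nu.
  The ratio psi solves a Riccati equation, and barrier arguments give
  psi(z) = 1 - (nu + 1/2)/z + O(z^-2) for large z. Hence z psi(z) - z is bounded, and integrating
  psi gives sqrt z I_nu(z) <= K (z/(1+z))^(nu+1/2) e^z. The factor e^z turns the Gaussian into
  exp(-C(x-y)^2/(4S)) <= exp(-(x-y)^2/(8t)), which also absorbs the polynomial terms of the
  bracket; the remaining powers of S and t give t^(-3/2) and, for nu < -1/2, the weights
  (1 + sqrt t/x)^gamma (1 + sqrt t/y)^gamma come from (z/(1+z))^(nu+1/2).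
\<close>

section \<open>Elementary real analysis\<close>

lemma DERIV_pos_at_zeros_imp_pos:
  fixes h h' :: "real \<Rightarrow> real"
  assumes ha: "h a > 0"
    and der: "\<And>z. z \<ge> a \<Longrightarrow> (h has_real_derivative h' z) (at z)"
    and cr: "\<And>z. z \<ge> a \<Longrightarrow> h z = 0 \<Longrightarrow> h' z > 0"
    and b: "b \<ge> a"
  shows "h b > 0"
proof (rule ccontr)
  assume "\<not> h b > 0"
  then have hb: "h b \<le> 0" by simp
  have cont: "isCont h x" if "x \<ge> a" for x
    using der[OF that] by (rule DERIV_isCont)
  have conton: "continuous_on {a..b} h" using cont by (intro continuous_at_imp_continuous_on) auto
  define Z where "Z = {x \<in> {a..b}. h x = 0}"
  have "closed Z" unfolding Z_def by (rule continuous_closed_preimage_constant[OF conton]) simp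
  moreover have "bounded Z" by (rule bounded_subset[OF bounded_closed_interval]) (auto simp: Z_def)
  ultimately have cpt: "compact Z" using compact_eq_bounded_closed by blast
  have ne: "Z \<noteq> {}"
  proof -
    obtain x where "a \<le> x" "x \<le> b" "h x = 0" using IVT2[of h b 0 a] hb ha b cont by force
    then show ?thesis unfolding Z_def by auto
  qed
  obtain c where cZ: "c \<in> Z" and cmin: "\<And>y. y \<in> Z \<Longrightarrow> c \<le> y"
    using compact_attains_inf[OF cpt ne] by blast
  have hc: "h c = 0" "a \<le> c" "c \<le> b" using cZ unfolding Z_def by auto
  have ca: "c > a" using hc ha by (cases "c = a") auto
  have "h' c > 0" using cr hc by auto
  then obtain d where d: "d > 0" "\<And>k. k > 0 \<Longrightarrow> k < d \<Longrightarrow> h (c - k) < h c"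
    using DERIV_pos_inc_left[OF der[OF hc(2)]] by blast
  define k where "k = min (d/2) ((c - a)/2)"
  have k: "k > 0" "k < d" "c - k \<ge> a"
    unfolding k_def using d(1) ca by (auto simp: min_def field_simps)
  have "h (c - k) < 0" using d(2)[OF k(1) k(2)] hc by simp
  then obtain x where x: "a \<le> x" "x \<le> c - k" "h x = 0"
    using IVT2[of h "c - k" 0 a] ha k cont by force
  then have "x \<in> Z" using hc k unfolding Z_def by auto
  with cmin x k show False by force
qed

lemma riccati_upper_bound:
  fixes e :: "real \<Rightarrow> real"
  assumes deriv: "\<And>z. z \<ge> 4 \<Longrightarrow> (e has_real_derivative - e z * (2 + e z) + mu / z^2) (at z)"
  obtains A where "A > 0" "\<And>z. z \<ge> 4 \<Longrightarrow> e z < A / z^2"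
proof -
  define A where "A = max (\<bar>mu\<bar> + 1) (16 * \<bar>e 4\<bar> + 1)"
  have A: "A > 0" "A \<ge> \<bar>mu\<bar> + 1" "A \<ge> 16 * \<bar>e 4\<bar> + 1"
    unfolding A_def by auto
  have "A / z^2 - e z > 0" if "z \<ge> 4" for z
  proof (rule DERIV_pos_at_zeros_imp_pos[OF _ _ _ that])
    show "A / 4^2 - e 4 > 0"
      using A(3) by (simp add: field_simps)
  next
    fix z :: real assume "z \<ge> 4"
    then show "((\<lambda>z. A / z^2 - e z) has_real_derivative -2*A/z^3 - (- e z * (2 + e z) + mu / z^2)) (at z)"
      using deriv by (auto intro!: derivative_eq_intros simp: field_simps power2_eq_square power3_eq_cube)
  next
    fix z :: real assume z: "z \<ge> 4" and "A / z^2 - e z = 0"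
    then have e: "e z = A / z^2" by simp
    have "(2*A - mu) * z \<ge> (2*A - mu) * 4"
      using A z by (intro mult_left_mono) auto
    moreover have "(2*A - mu) * 4 = 8*A - 4*mu" by simp
    ultimately have "(2*A - mu) * z - 2*A > 0"
      using A abs_ge_self[of mu] by linarith
    moreover have "-2*A/z^3 - (- e z * (2 + e z) + mu / z^2) = ((2*A - mu) * z - 2*A) / z^3 + e z ^ 2"
      using z unfolding e by (simp add: field_simps power2_eq_square power3_eq_cube)
    ultimately show "-2*A/z^3 - (- e z * (2 + e z) + mu / z^2) > 0"
      using z by (simp add: add_pos_nonneg)
  qed
  then show thesis
    using that A(1) by simp
qed

lemma riccati_lower_bound:
  fixes e :: "real \<Rightarrow> real"
  assumes deriv: "\<And>z. z \<ge> 4 \<Longrightarrow> (e has_real_derivative - e z * (2 + e z) + mu / z^2) (at z)"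
    and e_ge: "\<And>z. z \<ge> 4 \<Longrightarrow> e z \<ge> -9/8"
  obtains B where "B > 0" "\<And>z. z \<ge> 4 \<Longrightarrow> - B / z < e z"
proof -
  define B where "B = max (\<bar>mu\<bar> + 1) (4 * \<bar>e 4\<bar> + 1)"
  have B: "B > 0" "B \<ge> \<bar>mu\<bar> + 1" "B \<ge> 4 * \<bar>e 4\<bar> + 1"
    unfolding B_def by auto
  have pos: "e z + B / z > 0" if "z \<ge> 4" for z
  proof (rule DERIV_pos_at_zeros_imp_pos[OF _ _ _ that])
    show "e 4 + B / 4 > 0"
      using B(3) by (simp add: field_simps)
  next
    fix z :: real assume "z \<ge> 4"
    then show "((\<lambda>z. e z + B / z) has_real_derivative (- e z * (2 + e z) + mu / z^2) - B / z^2) (at z)"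
      using deriv by (auto intro!: derivative_eq_intros simp: field_simps power2_eq_square)
  next
    fix z :: real assume z: "z \<ge> 4" and "e z + B / z = 0"
    then have e: "- e z = B / z" by simp
    have "B * z * (7/8) \<ge> B * 4 * (7/8)"
      using B z by simp
    then have "B * z * (7/8) + mu - B > 0"
      using B abs_ge_minus_self[of mu] by linarith
    moreover have "(B / z) * (7/8) + mu / z^2 - B / z^2 = (B * z * (7/8) + mu - B) / z^2"
      using z by (simp add: field_simps power2_eq_square)
    ultimately have "(B / z) * (7/8) + mu / z^2 - B / z^2 > 0"
      using z by simp
    moreover have "(B / z) * (7/8) \<le> (B / z) * (2 + e z)"
      using e_ge[OF z] B z by (intro mult_left_mono) auto
    ultimately show "(- e z * (2 + e z) + mu / z^2) - B / z^2 > 0"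
      unfolding e by linarith
  qed
  show thesis
  proof (rule that[OF B(1)])
    fix z :: real assume "z \<ge> 4"
    then show "- B / z < e z"
      using pos[of z] minus_divide_left[of B z] by linarith
  qed
qed

lemma sinh_ge_self: "s \<ge> 0 \<Longrightarrow> s \<le> sinh (s::real)"
  using real_le_x_sinh by (simp add: sinh_field_def exp_minus)

lemma sinh_le_mult_cosh:
  assumes "s \<ge> 0"
  shows "sinh s \<le> s * cosh (s::real)"
proof -
  have "(\<lambda>u. u * cosh u - sinh u) 0 \<le> (\<lambda>u. u * cosh u - sinh u) s"
  proof (rule DERIV_nonneg_imp_nondecreasing[OF assms])
    fix u :: real assume "0 \<le> u"
    then show "\<exists>d. ((\<lambda>u. u * cosh u - sinh u) has_real_derivative d) (at u) \<and> d \<ge> 0"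
      by (intro exI[of _ "u * sinh u"]) (auto intro!: derivative_eq_intros)
  qed
  then show ?thesis by simp
qed

lemma cosh_le_sinh_add_one:
  assumes "s \<ge> 0"
  shows "cosh s \<le> sinh s + (1::real)"
proof -
  have "exp (- s) \<le> 1"
    using assms by simp
  then show ?thesis
    using cosh_minus_sinh[of s] by linarith
qed

lemma exp_le_four_sinh:
  assumes "s \<ge> 1"
  shows "exp s \<le> 4 * sinh (s::real)"
proof -
  have "2 \<le> exp (2 * s)"
    using exp_ge_add_one_self[of "2 * s"] assms by linarith
  then have "2 * exp (- s) \<le> exp s"
    by (simp add: exp_minus field_simps flip: exp_add)
  then show ?thesis
    by (simp add: sinh_field_def)
qed

lemma powr_le_mult_sinh_powr:
  fixes a b :: real
  assumes "b > 0" "a \<ge> b"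
  obtains K where "K > 0" "\<And>s. s > 0 \<Longrightarrow> s powr a \<le> K * sinh s powr b"
proof -
  define c where "c = a / b"
  have "c > 0" unfolding c_def using assms by simp
  define K where "K = 1 + exp (a * (ln c - 1)) * 4 powr b"
  have K: "K \<ge> 1" unfolding K_def by simp
  have "s powr a \<le> K * sinh s powr b" if s: "s > 0" for s
  proof (cases "s \<le> 1")
    case True
    have "s powr a \<le> s powr b"
      using powr_mono'[OF assms(2)] s True by simp
    also have "\<dots> \<le> sinh s powr b"
      using sinh_ge_self[of s] s assms by (intro powr_mono2) auto
    also have "\<dots> \<le> K * sinh s powr b"
      using mult_right_mono[of 1 K "sinh s powr b"] K by simp
    finally show ?thesis .
  next
    case False
    txt \<open>ln s <= s/c - 1 + ln c turns the power s^a into the exponential e^(bs).\<close>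
    have "ln (s / c) \<le> s / c - 1"
      using s \<open>c > 0\<close> by (intro ln_le_minus_one) simp
    then have "a * ln s \<le> a * (s / c - 1 + ln c)"
      using s \<open>c > 0\<close> assms by (intro mult_left_mono) (auto simp: ln_div)
    also have "\<dots> = b * s + a * (ln c - 1)"
      unfolding c_def using assms by (simp add: field_simps)
    finally have "s powr a \<le> exp (a * (ln c - 1)) * exp (b * s)"
      using s by (simp add: powr_def mult.commute flip: exp_add)
    also have "exp (b * s) = (4 * (exp s / 4)) powr b"
      by (simp add: powr_def mult.commute)
    also have "\<dots> = 4 powr b * (exp s / 4) powr b"
      by (rule powr_mult)
    also have "exp (a * (ln c - 1)) * (4 powr b * (exp s / 4) powr b)
        \<le> exp (a * (ln c - 1)) * (4 powr b * sinh s powr b)"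
      using exp_le_four_sinh[of s] False assms by (intro mult_left_mono powr_mono2) auto
    also have "\<dots> \<le> K * sinh s powr b"
      unfolding K_def by (simp add: distrib_right)
    finally show ?thesis .
  qed
  moreover have "K > 0"
    using K by simp
  ultimately show thesis
    using that by blast
qed

lemma powr_three_halves:
  assumes "t > 0"
  shows "t powr (3/2) = t * sqrt (t::real)"
proof -
  have "t powr (3/2) = t powr (1 + 1/2)" by simp
  also have "\<dots> = t * sqrt t" using assms by (simp only: powr_add powr_half_sqrt) simp
  finally show ?thesis .
qed

lemma cosh_div_sinh_powr_le:
  assumes "t > 0"
  shows "cosh (2*t) / (sinh (2*t) * sqrt (sinh (2*t))) \<le> sinh (2*t) powr (-1/2) + sinh (2*t) powr (-3/2)"
proof -
  define S where "S = sinh (2*t)"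
  have "S > 0" unfolding S_def using assms by simp
  have "cosh (2*t) / (S * sqrt S) \<le> (S + 1) / (S * sqrt S)"
    unfolding S_def using cosh_le_sinh_add_one[of "2*t"] assms \<open>S > 0\<close>[unfolded S_def]
    by (intro divide_right_mono) auto
  also have "\<dots> = 1 / sqrt S + 1 / (S * sqrt S)"
    using \<open>S > 0\<close> by (simp add: field_simps)
  also have "\<dots> = S powr (-1/2) + S powr (-3/2)"
    using \<open>S > 0\<close> by (simp add: powr_minus_divide powr_three_halves powr_half_sqrt)
  finally show ?thesis unfolding S_def .
qed

lemma mult_exp_neg_le_one:
  assumes "u \<ge> 0"
  shows "u * exp (- u) \<le> (1::real)"
proof -
  have "u \<le> exp u"
    using exp_ge_add_one_self[of u] by linarith
  then show ?thesis
    by (simp add: exp_minus field_simps)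
qed

lemma exp_neg_mult_mult_exp_neg_le:
  fixes a u v :: real
  assumes "a \<ge> 0" "u \<ge> 0" "v \<ge> 0"
  shows "exp (- v) * (a * (u * exp (- u))) \<le> a"
proof -
  have "a * (u * exp (- u)) \<le> a"
    using mult_left_mono[OF mult_exp_neg_le_one[OF assms(2)] assms(1)] by simp
  moreover have "0 \<le> a * (u * exp (- u))"
    using assms by simp
  ultimately show ?thesis
    using mult_left_le_one_le[of "a * (u * exp (- u))" "exp (- v)"] assms(3) by simp
qed

lemma powr_frac_ge_min:
  fixes z m :: real
  assumes "z \<ge> 4"
  shows "min 1 ((4/5) powr m) \<le> (z / (1 + z)) powr m"
proof (cases "m \<ge> 0")
  case True
  have "4/5 \<le> z / (1 + z)" using assms by (simp add: field_simps)
  then have "(4/5) powr m \<le> (z / (1 + z)) powr m"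
    using True by (intro powr_mono2) auto
  then show ?thesis by simp
next
  case False
  have "z / (1 + z) \<le> 1" using assms by simp
  then have "1 powr m \<le> (z / (1 + z)) powr m"
    using False assms by (intro powr_mono2') auto
  then show ?thesis by simp
qed

lemma one_add_powr_le_max:
  fixes z m :: real
  assumes "0 \<le> z" "z \<le> 4"
  shows "(1 + z) powr m \<le> max 1 (5 powr m)"
proof (cases "m \<ge> 0")
  case True
  then have "(1 + z) powr m \<le> 5 powr m"
    using assms by (intro powr_mono2) auto
  then show ?thesis by simp
next
  case False
  then have "(1 + z) powr m \<le> 1 powr m"
    using assms by (intro powr_mono2') auto
  then show ?thesis by simp
qed

section \<open>The power series of the modified Bessel function\<close>

text \<open>The entire function F_nu(w) = sum_k w^k / (k! Gamma(k + nu + 1)) satisfies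
  I_nu(z) = (z/2)^nu F_nu(z^2/4) and is positive on [0, oo).\<close>
definition bessel_coeff :: "real \<Rightarrow> nat \<Rightarrow> real" where
  "bessel_coeff nu k = 1 / (fact k * Gamma (real k + nu + 1))"

definition bessel_series :: "real \<Rightarrow> real \<Rightarrow> real" where
  "bessel_series nu w = (\<Sum>k. bessel_coeff nu k * w ^ k)"

lemma bessel_coeff_pos: "nu > -1 \<Longrightarrow> bessel_coeff nu k > 0"
  unfolding bessel_coeff_def by (simp add: Gamma_real_pos)

lemma bessel_coeff_shift:
  assumes "nu > -1"
  shows "bessel_coeff (nu + 1) k = bessel_coeff nu k / (real k + nu + 1)"
proof -
  have "real k + nu + 1 \<notin> \<int>\<^sub>\<le>\<^sub>0"
    using assms by (auto elim!: nonpos_Ints_cases)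
  from Gamma_plus1[OF this]
  have "Gamma (real k + (nu + 1) + 1) = (real k + nu + 1) * Gamma (real k + nu + 1)"
    by (simp add: add.assoc)
  then show ?thesis
    unfolding bessel_coeff_def by (simp add: field_simps)
qed

lemma bessel_coeff_Suc:
  assumes "nu > -1"
  shows "bessel_coeff nu (Suc k) = bessel_coeff nu k / ((real k + 1) * (real k + nu + 1))"
proof -
  have "Gamma (real (Suc k) + nu + 1) = Gamma (real k + (nu + 1) + 1)"
    by (simp add: algebra_simps)
  then have "bessel_coeff nu (Suc k) = bessel_coeff (nu + 1) k / (real k + 1)"
    unfolding bessel_coeff_def by (simp add: field_simps)
  also have "\<dots> = bessel_coeff nu k / ((real k + 1) * (real k + nu + 1))"
    unfolding bessel_coeff_shift[OF assms] by simp
  finally show ?thesis .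
qed

lemma diffs_bessel_coeff:
  assumes "nu > -1"
  shows "diffs (bessel_coeff nu) = bessel_coeff (nu + 1)"
proof
  fix k
  have "diffs (bessel_coeff nu) k = (real k + 1) * bessel_coeff nu (Suc k)"
    unfolding diffs_def by simp
  also have "\<dots> = bessel_coeff nu k / (real k + nu + 1)"
    unfolding bessel_coeff_Suc[OF assms] by simp
  finally show "diffs (bessel_coeff nu) k = bessel_coeff (nu + 1) k"
    by (simp add: bessel_coeff_shift[OF assms])
qed

lemma summable_bessel_series:
  assumes "nu > -1"
  shows "summable (\<lambda>k. bessel_coeff nu k * w ^ k)"
proof -
  obtain N :: nat where N: "real N \<ge> 2 * \<bar>w\<bar>"
    using real_arch_simple by blast
  show ?thesis
  proof (rule summable_ratio_test[where c = "1/2" and N = N])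
    fix k assume "k \<ge> N"
    then have k: "real k \<ge> 2 * \<bar>w\<bar>" using N by linarith
    define d where "d = (real k + 1) * (real k + nu + 1)"
    have "d > 0" unfolding d_def using assms by simp
    have "2 * \<bar>w\<bar> \<le> d"
    proof (cases "real k + nu + 1 \<ge> 1")
      case True
      then have "real k + 1 \<le> d" unfolding d_def
        using mult_left_mono[OF True, of "real k + 1"] by simp
      then show ?thesis using k by linarith
    next
      case False
      then have "w = 0" using assms k by (cases k) auto
      then show ?thesis using \<open>d > 0\<close> by simp
    qed
    then have "\<bar>w\<bar> / d \<le> 1/2" using \<open>d > 0\<close> by (simp add: field_simps)
    then have "bessel_coeff nu k * \<bar>w\<bar> ^ k * (\<bar>w\<bar> / d) \<le> bessel_coeff nu k * \<bar>w\<bar> ^ k * (1/2)"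
      using bessel_coeff_pos[OF assms, of k] by (intro mult_left_mono mult_nonneg_nonneg) auto
    then show "norm (bessel_coeff nu (Suc k) * w ^ Suc k) \<le> 1/2 * norm (bessel_coeff nu k * w ^ k)"
      using bessel_coeff_pos[OF assms, of k] \<open>d > 0\<close>
      by (simp add: bessel_coeff_Suc[OF assms] d_def abs_mult power_abs field_simps)
  qed simp
qed

lemma bessel_series_has_derivative:
  assumes "nu > -1"
  shows "(bessel_series nu has_real_derivative bessel_series (nu + 1) w) (at w)"
  using termdiffs_strong_converges_everywhere[OF summable_bessel_series[OF assms]]
  unfolding bessel_series_def[abs_def] diffs_bessel_coeff[OF assms] by simp

lemma bessel_series_pos:
  assumes "nu > -1" "w \<ge> 0"
  shows "bessel_series nu w > 0"
  unfolding bessel_series_def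
proof (rule suminf_pos2[where i = 0])
  show "0 \<le> bessel_coeff nu k * w ^ k" for k
    using assms bessel_coeff_pos[OF assms(1), of k] by simp
qed (use summable_bessel_series[OF assms(1)] bessel_coeff_pos[OF assms(1)] in auto)

lemma bessel_series_mono:
  assumes "nu > -1" "0 \<le> v" "v \<le> w"
  shows "bessel_series nu v \<le> bessel_series nu w"
  unfolding bessel_series_def
proof (rule suminf_le)
  show "bessel_coeff nu k * v ^ k \<le> bessel_coeff nu k * w ^ k" for k
    using assms bessel_coeff_pos[OF assms(1), of k] by (intro mult_left_mono power_mono) auto
qed (use summable_bessel_series[OF assms(1)] in auto)

lemma bessel_series_shift_le:
  assumes "nu > -1" "0 \<le> w"
  shows "bessel_series (nu + 1) w \<le> bessel_series nu w / (nu + 1)"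
proof -
  have "bessel_coeff (nu + 1) k * w ^ k \<le> bessel_coeff nu k * w ^ k / (nu + 1)" for k
    unfolding bessel_coeff_shift[OF assms(1)]
    using assms bessel_coeff_pos[OF assms(1), of k] by (simp add: divide_left_mono)
  then have "bessel_series (nu + 1) w \<le> (\<Sum>k. bessel_coeff nu k * w ^ k / (nu + 1))"
    unfolding bessel_series_def using assms summable_bessel_series[of nu w] summable_bessel_series[of "nu + 1" w]
    by (intro suminf_le summable_divide) auto
  also have "\<dots> = bessel_series nu w / (nu + 1)"
    unfolding bessel_series_def using summable_bessel_series[OF assms(1)] by (simp add: suminf_divide)
  finally show ?thesis .
qed

lemma bessel_series_recurrence:
  assumes "nu > -1"
  shows "bessel_series nu w = (nu + 1) * bessel_series (nu + 1) w + w * bessel_series (nu + 2) w"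
proof -
  have nu1: "nu + 1 > -1" using assms by simp
  define g where "g k = real k * bessel_coeff (nu + 1) k * w ^ k" for k
  have "(\<lambda>k. diffs (bessel_coeff (nu + 1)) k * w ^ k) sums bessel_series (nu + 2) w"
    unfolding diffs_bessel_coeff[OF nu1] bessel_series_def
    using summable_bessel_series[of "nu + 2" w] assms by (simp add: add.assoc summable_sums)
  from sums_mult[OF this, of w]
  have "(\<lambda>k. g (Suc k)) sums (w * bessel_series (nu + 2) w)"
    unfolding g_def diffs_def by (simp add: algebra_simps)
  then have "g sums (w * bessel_series (nu + 2) w)"
    using sums_Suc_iff[of g] by (simp add: g_def)
  moreover have "(\<lambda>k. (nu + 1) * (bessel_coeff (nu + 1) k * w ^ k)) sums ((nu + 1) * bessel_series (nu + 1) w)"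
    unfolding bessel_series_def using summable_bessel_series[OF nu1] by (intro sums_mult summable_sums)
  ultimately have "(\<lambda>k. (nu + 1) * (bessel_coeff (nu + 1) k * w ^ k) + g k)
      sums ((nu + 1) * bessel_series (nu + 1) w + w * bessel_series (nu + 2) w)"
    by (intro sums_add)
  moreover have "(nu + 1) * (bessel_coeff (nu + 1) k * w ^ k) + g k = bessel_coeff nu k * w ^ k" for k
  proof -
    have "real k + nu + 1 > 0" using assms by simp
    then have "(nu + 1) * (a / (real k + nu + 1)) + real k * (a / (real k + nu + 1)) = a" for a
      by (simp add: divide_simps) (simp add: algebra_simps)
    from this[of "bessel_coeff nu k * w ^ k"] show ?thesis
      unfolding g_def bessel_coeff_shift[OF assms] by (simp add: algebra_simps)
  qed
  ultimately show ?thesis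
    unfolding bessel_series_def by (simp add: sums_iff)
qed

lemma bessel_series_square_has_derivative:
  assumes "nu > -1"
  shows "((\<lambda>z. bessel_series nu (z^2/4)) has_real_derivative bessel_series (nu + 1) (z^2/4) * (z/2)) (at z)"
proof -
  have "((\<lambda>z. z^2/4) has_real_derivative z/2) (at z)"
    by (auto intro!: derivative_eq_intros)
  from DERIV_chain2[OF bessel_series_has_derivative[OF assms] this] show ?thesis .
qed

lemma besselI_eq_bessel_series:
  assumes "nu > -1" "z > 0"
  shows "besselI nu z = (z/2) powr nu * bessel_series nu (z^2/4)"
proof -
  have "(z/2) powr (2 * real k + nu) = (z/2) powr nu * (z^2/4)^k" for k
  proof -
    have "(z/2) powr (2 * real k + nu) = (z/2) powr (real (2*k)) * (z/2) powr nu"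
      by (simp add: powr_add)
    also have "(z/2) powr (real (2*k)) = (z/2)^(2*k)"
      using assms by (intro powr_realpow) simp
    also have "\<dots> = (z^2/4)^k"
      by (simp add: power_mult power_divide)
    finally show ?thesis by simp
  qed
  then have "besselI nu z = (\<Sum>k. (z/2) powr nu * (bessel_coeff nu k * (z^2/4)^k))"
    unfolding besselI_def bessel_coeff_def by simp
  also have "\<dots> = (z/2) powr nu * bessel_series nu (z^2/4)"
    unfolding bessel_series_def by (rule suminf_mult[OF summable_bessel_series[OF assms(1)]])
  finally show ?thesis .
qed

text \<open>bessel_ratio nu z = I_(nu+1)(z) / I_nu(z) for z > 0.\<close>
definition bessel_ratio :: "real \<Rightarrow> real \<Rightarrow> real" where
  "bessel_ratio nu z = (z/2) * bessel_series (nu + 1) (z^2/4) / bessel_series nu (z^2/4)"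

lemma bessel_ratio_nonneg: "nu > -1 \<Longrightarrow> z \<ge> 0 \<Longrightarrow> bessel_ratio nu z \<ge> 0"
  unfolding bessel_ratio_def
  using bessel_series_pos[of nu "z^2/4"] bessel_series_pos[of "nu + 1" "z^2/4"] by simp

lemma bessel_ratio_le:
  assumes "nu > -1" "z \<ge> 0"
  shows "bessel_ratio nu z \<le> z / (2 * (nu + 1))"
proof -
  have "bessel_series (nu + 1) (z^2/4) / bessel_series nu (z^2/4) \<le> 1 / (nu + 1)"
    using bessel_series_shift_le[OF assms(1), of "z^2/4"] bessel_series_pos[OF assms(1), of "z^2/4"] assms
    by (simp add: field_simps)
  from mult_left_mono[OF this, of "z/2"] assms show ?thesis
    unfolding bessel_ratio_def by simp
qed

lemma bessel_ratio_has_derivative: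
  assumes nu: "nu > -1" and z: "z > 0"
  shows "(bessel_ratio nu has_real_derivative 1 - (2*nu+1)/z * bessel_ratio nu z - (bessel_ratio nu z)^2) (at z)"
proof -
  define w where "w = z^2/4"
  define P where "P = bessel_series (nu + 1) w"
  define Q where "Q = bessel_series nu w"
  define R where "R = bessel_series (nu + 2) w"
  have nu1: "nu + 1 > -1" using nu by simp
  have "Q > 0" unfolding Q_def w_def using bessel_series_pos[OF nu] by simp
  have deriv: "((\<lambda>z. (z/2) * bessel_series (nu + 1) (z^2/4) / bessel_series nu (z^2/4)) has_real_derivative
      (((1/2) * P + (z/2) * (R * (z/2))) * Q - (z/2) * P * (P * (z/2))) / (Q * Q)) (at z)"
    using bessel_series_square_has_derivative[OF nu1, of z] bessel_series_square_has_derivative[OF nu, of z]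
      \<open>Q > 0\<close>
    unfolding P_def Q_def R_def w_def
    by (auto intro!: derivative_eq_intros simp: add.assoc one_add_one field_simps)
  have "(z/2) * (R * (z/2)) = Q - (nu + 1) * P"
    using bessel_series_recurrence[OF nu, of w] unfolding P_def Q_def R_def w_def
    by (simp add: power2_eq_square)
  then have "(((1/2) * P + (z/2) * (R * (z/2))) * Q - (z/2) * P * (P * (z/2))) / (Q * Q)
      = (((1/2) * P + (Q - (nu + 1) * P)) * Q - (z/2) * P * (P * (z/2))) / (Q * Q)"
    by simp
  also have "\<dots> = 1 - (2*nu+1)/z * ((z/2) * P / Q) - ((z/2) * P / Q)^2"
    using \<open>Q > 0\<close> z by (simp add: field_simps power2_eq_square)
  finally show ?thesis
    using deriv unfolding bessel_ratio_def[abs_def] P_def Q_def w_def by simp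
qed

section \<open>Asymptotics of the Bessel ratio\<close>

text \<open>The defect e in psi(z) = 1 - (nu + 1/2)/z + e(z): its Riccati equation has a forcing term
  of order z^-2, which the barrier lemmas above turn into -B/z < e(z) < A/z^2.\<close>
definition bessel_ratio_defect :: "real \<Rightarrow> real \<Rightarrow> real" where
  "bessel_ratio_defect nu z = bessel_ratio nu z - 1 + (nu + 1/2) / z"

lemma bessel_ratio_defect_has_derivative:
  assumes nu: "nu > -1" and z: "z > 0"
  shows "(bessel_ratio_defect nu has_real_derivative
      - bessel_ratio_defect nu z * (2 + bessel_ratio_defect nu z) + (nu^2 - 1/4) / z^2) (at z)"
proof -
  have "((\<lambda>z. bessel_ratio nu z - 1 + (nu + 1/2) / z) has_real_derivative
      (1 - (2*nu+1)/z * bessel_ratio nu z - (bessel_ratio nu z)^2) - (nu + 1/2) / z^2) (at z)"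
    using z by (auto intro!: derivative_eq_intros bessel_ratio_has_derivative[OF nu z]
        simp: power2_eq_square field_simps)
  moreover have "(1 - (2*nu+1)/z * bessel_ratio nu z - (bessel_ratio nu z)^2) - (nu + 1/2) / z^2
      = - bessel_ratio_defect nu z * (2 + bessel_ratio_defect nu z) + (nu^2 - 1/4) / z^2"
    unfolding bessel_ratio_defect_def using z by (simp add: field_simps power2_eq_square)
  ultimately show ?thesis
    unfolding bessel_ratio_defect_def[abs_def] by simp
qed

lemma bessel_ratio_defect_ge:
  assumes "nu > -1" "z \<ge> 4"
  shows "bessel_ratio_defect nu z \<ge> -9/8"
proof -
  have "(-1/2) / z \<le> (nu + 1/2) / z"
    using assms by (intro divide_right_mono) auto
  moreover have "-1/8 \<le> (-1/2) / z"
    using assms by (simp add: field_simps)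
  moreover have "bessel_ratio nu z \<ge> 0"
    using bessel_ratio_nonneg assms by simp
  ultimately show ?thesis
    unfolding bessel_ratio_defect_def by linarith
qed

lemma bessel_ratio_defect_bounds:
  assumes nu: "nu > -1"
  obtains A B where "A > 0" "B > 0"
    "\<And>z. z \<ge> 4 \<Longrightarrow> - B / z < bessel_ratio_defect nu z"
    "\<And>z. z \<ge> 4 \<Longrightarrow> bessel_ratio_defect nu z < A / z^2"
proof -
  have deriv: "(bessel_ratio_defect nu has_real_derivative
      - bessel_ratio_defect nu z * (2 + bessel_ratio_defect nu z) + (nu^2 - 1/4) / z^2) (at z)"
    if "z \<ge> 4" for z
    using bessel_ratio_defect_has_derivative[OF nu] that by simp
  obtain A where "A > 0" "\<And>z. z \<ge> 4 \<Longrightarrow> bessel_ratio_defect nu z < A / z^2"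
    using riccati_upper_bound[OF deriv] by blast
  moreover obtain B where "B > 0" "\<And>z. z \<ge> 4 \<Longrightarrow> - B / z < bessel_ratio_defect nu z"
    using riccati_lower_bound[OF deriv bessel_ratio_defect_ge[OF nu]] by blast
  ultimately show thesis
    using that by blast
qed

lemma bessel_ratio_asymptotic:
  assumes nu: "nu > -1"
  obtains K where "K > 0" "\<And>z. z > 0 \<Longrightarrow> \<bar>z * bessel_ratio nu z - z\<bar> \<le> K"
proof -
  obtain A B where A: "A > 0" "\<And>z. z \<ge> 4 \<Longrightarrow> bessel_ratio_defect nu z < A / z^2"
    and B: "B > 0" "\<And>z. z \<ge> 4 \<Longrightarrow> - B / z < bessel_ratio_defect nu z"
    using bessel_ratio_defect_bounds[OF nu] by metis
  define K where "K = A + B + \<bar>nu + 1/2\<bar> + 8/(nu+1) + 4"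
  have "nu + 1 > 0" using nu by simp
  have "\<bar>z * bessel_ratio nu z - z\<bar> \<le> K" if z: "z > 0" for z
  proof (cases "z \<ge> 4")
    case True
    have "z * bessel_ratio nu z - z = z * bessel_ratio_defect nu z - (nu + 1/2)"
      unfolding bessel_ratio_defect_def using z by (simp add: field_simps)
    moreover have "z * bessel_ratio_defect nu z < A / z"
      using mult_strict_left_mono[OF A(2)[OF True] z] z by (simp add: power2_eq_square)
    moreover have "A / z \<le> A"
      using A True by (simp add: field_simps)
    moreover have "z * bessel_ratio_defect nu z > - B"
      using mult_strict_left_mono[OF B(2)[OF True] z] z by simp
    moreover have "8 / (nu + 1) \<ge> 0"
      using \<open>nu + 1 > 0\<close> by simp
    ultimately show ?thesis
      unfolding K_def abs_le_iff using A(1) B(1) abs_ge_self[of "nu + 1/2"] abs_ge_minus_self[of "nu + 1/2"]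
      by linarith
  next
    case False
    have "bessel_ratio nu z \<le> 2 / (nu + 1)"
      using bessel_ratio_le[OF nu, of z] z False \<open>nu + 1 > 0\<close> by (simp add: field_simps)
    then have "z * bessel_ratio nu z \<le> 4 * (2 / (nu + 1))"
      using bessel_ratio_nonneg[OF nu, of z] False z by (intro mult_mono) auto
    moreover have "z * bessel_ratio nu z \<ge> 0"
      using bessel_ratio_nonneg[OF nu, of z] z by simp
    moreover have "4 * (2 / (nu + 1)) = 8 / (nu + 1)"
      by simp
    ultimately show ?thesis
      unfolding K_def abs_le_iff using False z A(1) B(1) abs_ge_zero[of "nu + 1/2"] by linarith
  qed
  moreover have "K > 0"
    unfolding K_def using A(1) B(1) abs_ge_zero[of "nu + 1/2"] divide_pos_pos[OF _ \<open>nu + 1 > 0\<close>, of 8]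
    by linarith
  ultimately show thesis
    using that by blast
qed

text \<open>Integrates (ln F_nu(z^2/4))' = psi(z) < 1 - (nu + 1/2)/z + A/z^2 from 4 to z.\<close>
lemma bessel_series_growth:
  assumes nu: "nu > -1"
  obtains K where "K > 0" "\<And>z. z \<ge> 4 \<Longrightarrow> z powr (nu + 1/2) * bessel_series nu (z^2/4) \<le> K * exp z"
proof -
  obtain A where A: "A > 0" "\<And>z. z \<ge> 4 \<Longrightarrow> bessel_ratio_defect nu z < A / z^2"
    using bessel_ratio_defect_bounds[OF nu] by metis
  define g where "g z = ln (bessel_series nu (z^2/4)) - z + (nu + 1/2) * ln z + A / z" for z
  have F_pos: "bessel_series nu (z^2/4) > 0" for z
    using bessel_series_pos[OF nu] by simp
  have dg: "(g has_real_derivative bessel_ratio_defect nu z - A / z^2) (at z)" if z: "z \<ge> 4" for z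
  proof -
    have "(g has_real_derivative bessel_series (nu + 1) (z^2/4) * (z/2) / bessel_series nu (z^2/4)
        - 1 + (nu + 1/2) / z - A / z^2) (at z)"
      unfolding g_def[abs_def] using z F_pos[of z] bessel_series_square_has_derivative[OF nu, of z]
      by (auto intro!: derivative_eq_intros simp: power2_eq_square field_simps)
    moreover have "bessel_series (nu + 1) (z^2/4) * (z/2) / bessel_series nu (z^2/4) - 1 + (nu + 1/2) / z - A / z^2
        = bessel_ratio_defect nu z - A / z^2"
      unfolding bessel_ratio_defect_def bessel_ratio_def by (simp add: field_simps)
    ultimately show ?thesis
      by (rule DERIV_cong)
  qed
  have "z powr (nu + 1/2) * bessel_series nu (z^2/4) \<le> exp (g 4) * exp z" if z: "z \<ge> 4" for z
  proof -
    have "g z \<le> g 4"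
      by (rule deriv_nonpos_imp_antimono[where g' = "\<lambda>z. bessel_ratio_defect nu z - A / z^2"])
        (use dg A z in \<open>auto simp: less_imp_le\<close>)
    moreover have "A / z \<ge> 0"
      using A z by simp
    ultimately have "ln (bessel_series nu (z^2/4)) + (nu + 1/2) * ln z \<le> g 4 + z"
      unfolding g_def by linarith
    then have "exp (ln (bessel_series nu (z^2/4)) + (nu + 1/2) * ln z) \<le> exp (g 4 + z)"
      by simp
    then show ?thesis
      using F_pos[of z] z by (simp add: exp_add powr_def mult.commute)
  qed
  then show thesis
    using that[of "exp (g 4)"] by simp
qed

lemma sqrt_mult_besselI:
  assumes "nu > -1" "z > 0"
  shows "sqrt z * besselI nu z = z powr (nu + 1/2) / 2 powr nu * bessel_series nu (z^2/4)"
proof -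
  have "sqrt z = z powr (1/2)"
    using assms by (simp add: powr_half_sqrt)
  moreover have "(z/2) powr nu = z powr nu / 2 powr nu"
    using assms by (simp add: powr_divide)
  ultimately show ?thesis
    using assms by (simp add: besselI_eq_bessel_series powr_add)
qed

text \<open>For large z this is the growth bound; for small z, sqrt z I_nu(z) is comparable to
  z^(nu+1/2).\<close>
lemma sqrt_mult_besselI_le:
  assumes nu: "nu > -1"
  obtains K where "K > 0"
    "\<And>z. z > 0 \<Longrightarrow> sqrt z * besselI nu z \<le> K * (z / (1 + z)) powr (nu + 1/2) * exp z"
proof -
  define m where "m = nu + 1/2"
  obtain Kg where Kg: "Kg > 0" "\<And>z. z \<ge> 4 \<Longrightarrow> z powr m * bessel_series nu (z^2/4) \<le> Kg * exp z"
    using bessel_series_growth[OF nu] unfolding m_def by blast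
  define F4 where "F4 = bessel_series nu (4^2/4)"
  have "F4 > 0"
    unfolding F4_def using bessel_series_pos[OF nu] by simp
  define K where "K = (Kg / min 1 ((4/5) powr m) + max 1 (5 powr m) * F4) / 2 powr nu"
  have "K > 0"
    unfolding K_def using Kg(1) \<open>F4 > 0\<close> by (intro divide_pos_pos add_pos_pos) auto
  have main: "z powr m * bessel_series nu (z^2/4) \<le> (2 powr nu * K) * (z / (1 + z)) powr m * exp z"
    if z: "z > 0" for z
  proof (cases "z \<ge> 4")
    case True
    have "Kg \<le> Kg / min 1 ((4/5) powr m) * (z / (1 + z)) powr m"
      using powr_frac_ge_min[OF True, of m] Kg(1) by (simp add: field_simps)
    also have "\<dots> \<le> 2 powr nu * K * (z / (1 + z)) powr m"
      unfolding K_def using \<open>F4 > 0\<close> by (intro mult_right_mono) auto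
    finally have "Kg * exp z \<le> 2 powr nu * K * (z / (1 + z)) powr m * exp z"
      by simp
    with Kg(2)[OF True] show ?thesis
      by linarith
  next
    case False
    have "z^2 \<le> 4^2"
      using False z by (intro power_mono) auto
    then have "bessel_series nu (z^2/4) \<le> F4"
      unfolding F4_def by (intro bessel_series_mono[OF nu]) auto
    then have "(1 + z) powr m * bessel_series nu (z^2/4) \<le> max 1 (5 powr m) * F4"
      using one_add_powr_le_max[of z m] False z bessel_series_pos[OF nu, of "z^2/4"]
      by (intro mult_mono) auto
    moreover have "z powr m * bessel_series nu (z^2/4)
        = (z / (1 + z)) powr m * ((1 + z) powr m * bessel_series nu (z^2/4))"
      using z by (simp add: powr_divide)
    ultimately have "z powr m * bessel_series nu (z^2/4) \<le> (z / (1 + z)) powr m * (max 1 (5 powr m) * F4)"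
      by (metis mult_left_mono powr_ge_zero)
    also have "\<dots> \<le> (z / (1 + z)) powr m * (2 powr nu * K)"
      unfolding K_def using Kg(1) by (intro mult_left_mono) auto
    also have "\<dots> \<le> 2 powr nu * K * (z / (1 + z)) powr m * exp z"
      using \<open>K > 0\<close> z by simp
    finally show ?thesis .
  qed
  have "sqrt z * besselI nu z \<le> K * (z / (1 + z)) powr m * exp z" if "z > 0" for z
  proof -
    have "sqrt z * besselI nu z = z powr m * bessel_series nu (z^2/4) / 2 powr nu"
      unfolding sqrt_mult_besselI[OF nu that] m_def by simp
    also have "\<dots> \<le> (2 powr nu * K) * (z / (1 + z)) powr m * exp z / 2 powr nu"
      using main[OF that] by (intro divide_right_mono) auto
    finally show ?thesis
      by simp
  qed
  then show thesis
    using that \<open>K > 0\<close> unfolding m_def by blast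
qed

section \<open>The time derivative of the kernel\<close>

lemma laguerre_heat_kernel_hyperbolic:
  assumes "t > 0" "x > 0" "y > 0"
  shows "laguerre_heat_kernel nu t x y = sqrt (x*y) / sinh (2*t)
    * exp (- (1/2) * (cosh (2*t) / sinh (2*t)) * (x^2 + y^2)) * besselI nu (x*y / sinh (2*t))"
proof -
  define r where "r = exp (-4*t)"
  define q where "q = exp (-2*t)"
  have "q > 0" unfolding q_def by simp
  have r: "r = q^2" unfolding r_def q_def by (simp add: power2_eq_square flip: exp_add)
  have "sinh (2*t) > 0" using assms by simp
  have minus: "1 - r = 2 * q * sinh (2*t)" and plus: "1 + r = 2 * q * cosh (2*t)"
    unfolding r q_def sinh_field_def cosh_field_def
    by (simp_all add: power2_eq_square field_simps flip: exp_add)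
  have "2 * sqrt (r * x * y) / (1 - r) = sqrt (x*y) / sinh (2*t)"
    using \<open>q > 0\<close> \<open>sinh (2*t) > 0\<close> assms unfolding minus by (simp add: r real_sqrt_mult)
  moreover have "(1 + r) / (1 - r) = cosh (2*t) / sinh (2*t)"
    using \<open>q > 0\<close> unfolding minus plus by simp
  moreover have "2 * sqrt r / (1 - r) * x * y = x * y / sinh (2*t)"
    using \<open>q > 0\<close> \<open>sinh (2*t) > 0\<close> unfolding minus by (simp add: r)
  ultimately show ?thesis
    unfolding laguerre_heat_kernel_def Let_def r_def[symmetric] by simp
qed

lemma laguerre_heat_kernel_log_form:
  assumes nu: "nu > -1" and s: "s > 0" and x: "x > 0" and y: "y > 0"
  shows "laguerre_heat_kernel nu s x y
    = exp (ln (sqrt (x*y)) + (- (nu + 1) * ln (sinh (2 * s)))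
        + (- (1/2) * (cosh (2 * s) / sinh (2 * s)) * (x^2 + y^2)) + nu * ln (x*y/2))
      * bessel_series nu ((x*y / sinh (2 * s))^2/4)"
proof -
  define E where "E = exp (- (1/2) * (cosh (2 * s) / sinh (2 * s)) * (x^2 + y^2))"
  have S: "sinh (2 * s) > 0" using s by simp
  have P: "((x*y / sinh (2 * s))/2) powr nu = exp (nu * ln (x*y/2)) / exp (nu * ln (sinh (2 * s)))"
    using S x y by (simp add: powr_def ln_div ln_mult algebra_simps flip: exp_diff)
  have "- (nu + 1) * ln (sinh (2 * s)) = - (ln (sinh (2 * s)) + nu * ln (sinh (2 * s)))"
    by (simp add: algebra_simps)
  then have "exp (- (nu + 1) * ln (sinh (2 * s))) = inverse (exp (ln (sinh (2 * s)) + nu * ln (sinh (2 * s))))"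
    by (simp only: exp_minus)
  then have "exp (- (nu + 1) * ln (sinh (2 * s))) = 1 / (sinh (2 * s) * exp (nu * ln (sinh (2 * s))))"
    using S by (simp only: exp_add exp_ln) (simp add: divide_inverse)
  then have "exp (ln (sqrt (x*y)) + (- (nu + 1) * ln (sinh (2 * s)))
        + (- (1/2) * (cosh (2 * s) / sinh (2 * s)) * (x^2 + y^2)) + nu * ln (x*y/2))
      = sqrt (x*y) * (1 / (sinh (2 * s) * exp (nu * ln (sinh (2 * s))))) * E * exp (nu * ln (x*y/2))"
    unfolding E_def exp_add using x y by simp
  also have "\<dots> = sqrt (x*y) / sinh (2 * s) * E * ((x*y / sinh (2 * s))/2) powr nu"
    unfolding P using S by (simp add: field_simps)
  finally show ?thesis
    unfolding laguerre_heat_kernel_hyperbolic[OF s x y] E_def[symmetric]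
    using besselI_eq_bessel_series[OF nu, of "x*y / sinh (2 * s)"] S x y by simp
qed

lemma laguerre_heat_kernel_has_derivative:
  assumes nu: "nu > -1" and t: "t > 0" and x: "x > 0" and y: "y > 0"
  defines "z \<equiv> x * y / sinh (2*t)"
  shows "((\<lambda>s. laguerre_heat_kernel nu s x y) has_real_derivative laguerre_heat_kernel nu t x y
    * ((x^2 + y^2) / sinh (2*t)^2 - 2 * cosh (2*t) / sinh (2*t) * (nu + 1 + z * bessel_ratio nu z))) (at t)"
proof -
  define L where "L s = ln (sqrt (x*y)) + (- (nu + 1) * ln (sinh (2 * s)))
      + (- (1/2) * (cosh (2 * s) / sinh (2 * s)) * (x^2 + y^2)) + nu * ln (x*y/2)" for s
  define G where "G s = bessel_series nu ((x*y / sinh (2 * s))^2/4)" for s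
  have eq: "laguerre_heat_kernel nu s x y = exp (L s) * G s" if "s > 0" for s
    unfolding L_def G_def by (rule laguerre_heat_kernel_log_form[OF nu that x y])
  define S where "S = sinh (2*t)"
  define C where "C = cosh (2*t)"
  have "S > 0" unfolding S_def using t by simp
  have "C^2 = S^2 + 1" unfolding S_def C_def by (rule cosh_square_eq)
  have dL: "(L has_real_derivative (x^2 + y^2) / S^2 - (nu + 1) * (2 * C / S)) (at t)"
  proof -
    have deriv: "(L has_real_derivative - (nu + 1) * (2 * C / S)
        - (1/2) * ((2 * S * S - C * (2 * C)) / (S * S)) * (x^2 + y^2)) (at t)"
      unfolding L_def[abs_def] S_def C_def using \<open>S > 0\<close>[unfolded S_def]
      by (auto intro!: derivative_eq_intros simp: field_simps)
    have "2 * S * S - C * (2 * C) = - 2"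
      using \<open>C^2 = S^2 + 1\<close> by (simp add: power2_eq_square algebra_simps)
    then have quot: "(2 * S * S - C * (2 * C)) / (S * S) = - 2 / S^2"
      by (simp add: power2_eq_square)
    have "- (nu + 1) * (2 * C / S) - (1/2) * ((2 * S * S - C * (2 * C)) / (S * S)) * (x^2 + y^2)
        = (x^2 + y^2) / S^2 - (nu + 1) * (2 * C / S)"
      using \<open>S > 0\<close> unfolding quot by (simp add: field_simps)
    with deriv show ?thesis
      by (rule DERIV_cong)
  qed
  have dG: "(G has_real_derivative bessel_series (nu + 1) (z^2/4) * (z/2) * (- z * (2 * C / S))) (at t)"
  proof -
    have "((\<lambda>s. x*y / sinh (2 * s)) has_real_derivative - z * (2 * C / S)) (at t)"
      unfolding z_def S_def C_def using \<open>S > 0\<close>[unfolded S_def]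
      by (auto intro!: derivative_eq_intros simp: power2_eq_square field_simps)
    from DERIV_chain2[OF bessel_series_square_has_derivative[OF nu] this]
    show ?thesis unfolding G_def z_def by simp
  qed
  have "G t = bessel_series nu (z^2/4)"
    unfolding G_def z_def ..
  then have ratio_G: "z * bessel_ratio nu z * G t = (z/2) * bessel_series (nu + 1) (z^2/4) * z"
    unfolding bessel_ratio_def using bessel_series_pos[OF nu, of "z^2/4"] by (simp add: mult_ac)
  have dG_eq: "bessel_series (nu + 1) (z^2/4) * (z/2) * (- z * (2 * C / S))
      = - (2 * C / S) * (z * bessel_ratio nu z * G t)"
    unfolding ratio_G by (simp add: algebra_simps)
  have "exp (L t) * ((x^2 + y^2) / S^2 - (nu + 1) * (2 * C / S)) * G t
      + bessel_series (nu + 1) (z^2/4) * (z/2) * (- z * (2 * C / S)) * exp (L t)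
      = exp (L t) * G t * ((x^2 + y^2) / S^2 - 2 * C / S * (nu + 1 + z * bessel_ratio nu z))"
    using \<open>S > 0\<close> unfolding dG_eq by (simp add: field_simps)
  with DERIV_mult[OF DERIV_chain2[OF DERIV_exp dL] dG]
  have "((\<lambda>s. exp (L s) * G s) has_real_derivative exp (L t) * G t
      * ((x^2 + y^2) / S^2 - 2 * C / S * (nu + 1 + z * bessel_ratio nu z))) (at t)"
    by (rule DERIV_cong)
  then show ?thesis
    unfolding S_def C_def eq[OF t, symmetric]
    by (rule has_field_derivative_transform_within_open[where S = "{0<..}"]) (use t eq in auto)
qed

lemma gamma_nu_bounds:
  assumes "nu > -1"
  shows "0 \<le> gamma_nu nu" "gamma_nu nu < 1/2"
  using assms unfolding gamma_nu_def by auto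

lemma sinh_powr_le_time_powr:
  fixes g :: real
  assumes "0 \<le> g" "g < 1/2"
  obtains K where "K > 0"
    "\<And>t. t > 0 \<Longrightarrow> sinh (2*t) powr (g - 1/2) + sinh (2*t) powr (g - 3/2) \<le> K * t powr (g - 3/2)"
proof -
  obtain K0 where K0: "K0 > 0" "\<And>s. s > 0 \<Longrightarrow> s powr (3/2 - g) \<le> K0 * sinh s powr (1/2 - g)"
    using powr_le_mult_sinh_powr[of "1/2 - g" "3/2 - g"] assms by auto
  have "sinh (2*t) powr (g - 1/2) + sinh (2*t) powr (g - 3/2) \<le> (K0 + 1) * t powr (g - 3/2)"
    if t: "t > 0" for t
  proof -
    define S where "S = sinh (2*t)"
    have "S > 0" "S \<ge> 2*t"
      unfolding S_def using t sinh_ge_self[of "2*t"] by auto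
    have "t powr (3/2 - g) \<le> (2*t) powr (3/2 - g)"
      using t assms by (intro powr_mono2) auto
    also have "\<dots> \<le> K0 * S powr (1/2 - g)"
      unfolding S_def using K0(2)[of "2*t"] t by simp
    finally have "1 / S powr (1/2 - g) \<le> K0 * (1 / t powr (3/2 - g))"
      using \<open>S > 0\<close> t by (simp add: field_simps)
    moreover have "S powr (g - 1/2) = 1 / S powr (1/2 - g)" "t powr (g - 3/2) = 1 / t powr (3/2 - g)"
      using powr_minus_divide[of S "1/2 - g"] powr_minus_divide[of t "3/2 - g"] by simp_all
    ultimately have "S powr (g - 1/2) \<le> K0 * t powr (g - 3/2)"
      by simp
    moreover have "S powr (g - 3/2) \<le> t powr (g - 3/2)"
      using \<open>S \<ge> 2*t\<close> t assms by (intro powr_mono2') auto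
    ultimately show ?thesis
      unfolding S_def by (simp add: distrib_right)
  qed
  then show thesis
    using that[of "K0 + 1"] K0(1) by simp
qed

lemma index_weight_le:
  assumes nu: "nu > -1" and t: "t > 0" and x: "x > 0" and y: "y > 0" and S: "S \<ge> 2*t"
  defines "a \<equiv> x*y / S"
  shows "(a / (1 + a)) powr (nu + 1/2)
    \<le> (2*S/t) powr gamma_nu nu * ((1 + sqrt t / x) * (1 + sqrt t / y)) powr gamma_nu nu"
proof (cases "nu < -1/2")
  case True
  define g where "g = gamma_nu nu"
  have g: "g > 0" "nu + 1/2 = - g" unfolding g_def gamma_nu_def using True by auto
  have "S > 0" "a > 0" unfolding a_def using S t x y by auto
  define P where "P = (1 + sqrt t / x) * (1 + sqrt t / y)"
  have "P = 1 + sqrt t / x + sqrt t / y + t / (x*y)"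
    unfolding P_def using t x y by (simp add: field_simps)
  then have "P \<ge> 1 + t / (x*y)"
    using t x y by simp
  then have "(1 + S/t) * (1 + t / (x*y)) \<le> (1 + S/t) * P"
    using \<open>S > 0\<close> t by (intro mult_left_mono) auto
  moreover have "(1 + S/t) * (1 + t / (x*y)) = 1 + t / (x*y) + S/t + S / (x*y)"
    using t x y by (simp add: field_simps)
  moreover have "t / (x*y) \<ge> 0" "1 \<le> S/t"
    using t x y S by (auto simp: field_simps)
  moreover have "(1 + a) / a = 1 + S / (x*y)"
    unfolding a_def using \<open>S > 0\<close> x y by (simp add: field_simps)
  ultimately have "(1 + a) / a \<le> (1 + S/t) * P"
    by linarith
  also have "\<dots> \<le> (2*S/t) * P"
    using \<open>1 \<le> S/t\<close> \<open>P \<ge> 1 + t / (x*y)\<close> \<open>t / (x*y) \<ge> 0\<close> by (intro mult_right_mono) auto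
  finally have "(1 + a) / a \<le> (2*S/t) * P" .
  then have "((1 + a) / a) powr g \<le> ((2*S/t) * P) powr g"
    using g \<open>a > 0\<close> by (intro powr_mono2) auto
  moreover have "(a / (1 + a)) powr (nu + 1/2) = ((1 + a) / a) powr g"
    using \<open>a > 0\<close> unfolding g(2) by (simp add: powr_minus_divide powr_divide)
  moreover have "((2*S/t) * P) powr g = (2*S/t) powr g * P powr g"
    by (rule powr_mult)
  ultimately show ?thesis
    unfolding g_def[symmetric] P_def[symmetric] by linarith
next
  case False
  have "a \<ge> 0"
    unfolding a_def using S t x y by simp
  then have "\<bar>a / (1 + a)\<bar> \<le> 1"
    by simp
  then have weight: "(a / (1 + a)) powr (nu + 1/2) \<le> 1"
    using False by (intro powr_le1) auto
  have "sqrt t / x \<ge> 0" "sqrt t / y \<ge> 0"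
    using t x y by auto
  then have "(1 + sqrt t / x) * (1 + sqrt t / y) \<noteq> 0"
    by (metis add_pos_nonneg mult_pos_pos zero_less_one less_irrefl)
  moreover have "2*S/t \<noteq> 0"
    using S t by simp
  moreover have "gamma_nu nu = 0"
    unfolding gamma_nu_def using False by simp
  ultimately show ?thesis
    using weight by simp
qed

lemma time_weight_le:
  assumes nu: "nu > -1"
  obtains K where "K > 0"
    "\<And>t x y. t > 0 \<Longrightarrow> x > 0 \<Longrightarrow> y > 0 \<Longrightarrow>
      ((x*y / sinh (2*t)) / (1 + x*y / sinh (2*t))) powr (nu + 1/2)
        * (cosh (2*t) / (sinh (2*t) * sqrt (sinh (2*t))))
      \<le> K / t powr (3/2) * (1 + sqrt t / x) powr gamma_nu nu * (1 + sqrt t / y) powr gamma_nu nu"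
proof -
  define g where "g = gamma_nu nu"
  obtain K where K: "K > 0"
    "\<And>t. t > 0 \<Longrightarrow> sinh (2*t) powr (g - 1/2) + sinh (2*t) powr (g - 3/2) \<le> K * t powr (g - 3/2)"
    using sinh_powr_le_time_powr gamma_nu_bounds[OF nu] unfolding g_def by blast
  have "((x*y / sinh (2*t)) / (1 + x*y / sinh (2*t))) powr (nu + 1/2)
        * (cosh (2*t) / (sinh (2*t) * sqrt (sinh (2*t))))
      \<le> 2 * K / t powr (3/2) * (1 + sqrt t / x) powr g * (1 + sqrt t / y) powr g"
    if t: "t > 0" and x: "x > 0" and y: "y > 0" for t x y
  proof -
    define S where "S = sinh (2*t)"
    define P where "P = ((1 + sqrt t / x) * (1 + sqrt t / y)) powr g"
    have "S > 0" "S \<ge> 2*t"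
      unfolding S_def using t sinh_ge_self[of "2*t"] by auto
    have "((x*y / S) / (1 + x*y / S)) powr (nu + 1/2) * (cosh (2*t) / (S * sqrt S))
        \<le> ((2*S/t) powr g * P) * (S powr (-1/2) + S powr (-3/2))"
      using index_weight_le[OF nu t x y \<open>S \<ge> 2*t\<close>] cosh_div_sinh_powr_le[OF t] \<open>S > 0\<close>
      unfolding S_def[symmetric] g_def[symmetric] P_def by (intro mult_mono) auto
    also have "\<dots> = 2 powr g * P / t powr g * (S powr g * S powr (-1/2) + S powr g * S powr (-3/2))"
      using \<open>S > 0\<close> t by (simp add: powr_mult powr_divide algebra_simps)
    also have "\<dots> = 2 powr g * P / t powr g * (S powr (g - 1/2) + S powr (g - 3/2))"
      unfolding powr_add[symmetric] by simp
    also have "\<dots> \<le> 2 powr g * P / t powr g * (K * t powr (g - 3/2))"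
      unfolding S_def using K(2)[OF t] by (intro mult_left_mono) (auto simp: P_def)
    also have "\<dots> = 2 powr g * K * P / t powr (3/2)"
      unfolding powr_diff using t by (simp add: field_simps)
    also have "\<dots> \<le> 2 * K * P / t powr (3/2)"
    proof -
      have "2 powr g \<le> 2 powr (1::real)"
        using gamma_nu_bounds[OF nu] unfolding g_def by (intro powr_mono) auto
      then show ?thesis
        using K(1) t by (intro divide_right_mono mult_right_mono) (auto simp: P_def)
    qed
    also have "P = (1 + sqrt t / x) powr g * (1 + sqrt t / y) powr g"
      unfolding P_def by (rule powr_mult)
    finally show ?thesis
      unfolding S_def by (simp add: mult.assoc)
  qed
  with K(1) show thesis
    using that[of "2 * K"] unfolding g_def by simp
qed

text \<open>With u = c(x-y)^2/(4S) and v = xy(c-1)/S the exponent is -2u - v and the bracket is a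
  combination of u, v and a bounded term; u e^-u <= 1 and v e^-v <= 1 leave one factor e^-u.\<close>
lemma gaussian_bracket_bound:
  fixes S c x y q nu K :: real
  assumes S: "S > 0" and c: "c \<ge> 1" and xy: "x * y \<ge> 0" and q: "\<bar>q - x*y/S\<bar> \<le> K"
  shows "exp (x*y/S) * exp (- (1/2) * (c / S) * (x^2 + y^2))
           * \<bar>(x^2 + y^2) / S^2 - (2 * c / S) * (nu + 1 + q)\<bar>
       \<le> exp (- (c * (x - y)^2 / (4*S))) * (c / S) * (6 + 2 * \<bar>nu + 1\<bar> + 2 * K)"
proof -
  define u where "u = c * (x - y)^2 / (4*S)"
  define v where "v = x*y*(c - 1) / S"
  have "u \<ge> 0" unfolding u_def using S c by simp
  have "v \<ge> 0" unfolding v_def using S c xy by simp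
  have "K \<ge> 0" using q by linarith
  have exponent: "exp (x*y/S) * exp (- (1/2) * (c / S) * (x^2 + y^2)) = exp (-u) * exp (-u) * exp (-v)"
    unfolding u_def v_def using S by (simp add: field_simps power2_eq_square flip: exp_add)
  have identity: "(x^2 + y^2) / S^2 - (2 * c / S) * (nu + 1 + q)
      = (4 / (c * S)) * u - (2 / S) * v - (2 * c / S) * (nu + 1 + (q - x*y/S))"
    unfolding u_def v_def using S c by (simp add: field_simps power2_eq_square)
  have tri: "\<bar>nu + 1 + (q - x*y/S)\<bar> \<le> \<bar>nu + 1\<bar> + K"
    using q abs_triangle_ineq[of "nu + 1" "q - x*y/S"] by linarith
  have "\<bar>(2 * c / S) * (nu + 1 + (q - x*y/S))\<bar> \<le> (2 * c / S) * (\<bar>nu + 1\<bar> + K)"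
    using mult_left_mono[OF tri, of "2 * c / S"] S c by (simp add: abs_mult)
  moreover have "(4 / (c * S)) * u \<ge> 0" "(2 / S) * v \<ge> 0"
    using \<open>u \<ge> 0\<close> \<open>v \<ge> 0\<close> S c by simp_all
  ultimately have bracket: "\<bar>(x^2 + y^2) / S^2 - (2 * c / S) * (nu + 1 + q)\<bar>
      \<le> (4 / (c * S)) * u + (2 / S) * v + (2 * c / S) * (\<bar>nu + 1\<bar> + K)"
    unfolding identity
    using abs_ge_self[of "(2 * c / S) * (nu + 1 + (q - x*y/S))"]
      abs_ge_minus_self[of "(2 * c / S) * (nu + 1 + (q - x*y/S))"] by (intro abs_leI; linarith)
  have "1 / c \<le> c"
    using c by (simp add: field_simps) (metis mult_mono order_trans zero_le_one mult_1_left)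
  then have "4 / (c * S) \<le> 4 * c / S"
    using mult_left_mono[of "1 / c" c "4 / S"] S by (simp add: mult.commute)
  moreover have "exp (-v) * ((4 / (c * S)) * (u * exp (-u))) \<le> 4 / (c * S)"
    by (rule exp_neg_mult_mult_exp_neg_le) (use S c \<open>u \<ge> 0\<close> \<open>v \<ge> 0\<close> in auto)
  ultimately have u_term: "exp (-v) * ((4 / (c * S)) * (u * exp (-u))) \<le> 4 * c / S"
    by linarith
  have "exp (-u) * ((2 / S) * (v * exp (-v))) \<le> 2 / S"
    by (rule exp_neg_mult_mult_exp_neg_le) (use S \<open>u \<ge> 0\<close> \<open>v \<ge> 0\<close> in auto)
  moreover have "2 / S \<le> 2 * c / S"
    using S c by (simp add: divide_right_mono)
  ultimately have v_term: "exp (-u) * ((2 / S) * (v * exp (-v))) \<le> 2 * c / S"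
    by linarith
  have "exp (-u) * exp (-v) \<le> 1"
    using \<open>u \<ge> 0\<close> \<open>v \<ge> 0\<close> by (simp add: mult_le_one)
  then have rest: "exp (-u) * exp (-v) * ((2 * c / S) * (\<bar>nu + 1\<bar> + K)) \<le> (2 * c / S) * (\<bar>nu + 1\<bar> + K)"
    using S c \<open>K \<ge> 0\<close> by (intro mult_left_le_one_le) auto
  have "exp (x*y/S) * exp (- (1/2) * (c / S) * (x^2 + y^2))
           * \<bar>(x^2 + y^2) / S^2 - (2 * c / S) * (nu + 1 + q)\<bar>
      \<le> exp (-u) * exp (-u) * exp (-v) * ((4 / (c * S)) * u + (2 / S) * v + (2 * c / S) * (\<bar>nu + 1\<bar> + K))"
    unfolding exponent using bracket by (intro mult_left_mono) auto
  also have "\<dots> = exp (-u) * (exp (-v) * ((4 / (c * S)) * (u * exp (-u)))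
      + exp (-u) * ((2 / S) * (v * exp (-v))) + exp (-u) * exp (-v) * ((2 * c / S) * (\<bar>nu + 1\<bar> + K)))"
    by (simp add: algebra_simps)
  also have "\<dots> \<le> exp (-u) * (4 * c / S + 2 * c / S + (2 * c / S) * (\<bar>nu + 1\<bar> + K))"
    using u_term v_term rest by (intro mult_left_mono add_mono) auto
  also have "\<dots> = exp (-u) * (c / S) * (6 + 2 * \<bar>nu + 1\<bar> + 2 * K)"
    by (simp add: algebra_simps add_divide_distrib)
  finally show ?thesis
    unfolding u_def by simp
qed

lemma abs_deriv_laguerre_heat_kernel_le:
  assumes nu: "nu > -1" and t: "t > 0" and x: "x > 0" and y: "y > 0"
  defines "S \<equiv> sinh (2*t)" and "z \<equiv> x * y / sinh (2*t)"
  assumes "K1 \<ge> 0"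
    and bessel: "sqrt z * besselI nu z \<le> K1 * (z / (1 + z)) powr (nu + 1/2) * exp z"
    and ratio: "\<bar>z * bessel_ratio nu z - z\<bar> \<le> K2"
  shows "\<bar>deriv (\<lambda>s. laguerre_heat_kernel nu s x y) t\<bar>
    \<le> K1 * (6 + 2 * \<bar>nu + 1\<bar> + 2 * K2) * exp (- ((x - y)^2 / (8 * t)))
      * ((z / (1 + z)) powr (nu + 1/2) * (cosh (2*t) / (S * sqrt S)))"
proof -
  define c where "c = cosh (2*t)"
  define W where "W = (z / (1 + z)) powr (nu + 1/2)"
  define E where "E = exp (- (1/2) * (c / S) * (x^2 + y^2))"
  define br where "br = (x^2 + y^2) / S^2 - 2 * c / S * (nu + 1 + z * bessel_ratio nu z)"
  define K3 where "K3 = 6 + 2 * \<bar>nu + 1\<bar> + 2 * K2"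
  have "S > 0" "c \<ge> 1" "z > 0"
    unfolding S_def c_def z_def using t x y cosh_real_ge_1 by auto
  have "0 \<le> K1 * W"
    unfolding W_def using \<open>K1 \<ge> 0\<close> by simp
  have "0 \<le> K1 * K3"
    unfolding K3_def using \<open>K1 \<ge> 0\<close> ratio by simp
  have "deriv (\<lambda>s. laguerre_heat_kernel nu s x y) t = laguerre_heat_kernel nu t x y * br"
    using laguerre_heat_kernel_has_derivative[OF nu t x y] unfolding br_def S_def c_def z_def
    by (rule DERIV_imp_deriv)
  moreover have "laguerre_heat_kernel nu t x y = sqrt z * besselI nu z / sqrt S * E"
    unfolding laguerre_heat_kernel_hyperbolic[OF t x y] E_def z_def S_def c_def using \<open>S > 0\<close> x y
    by (simp add: real_sqrt_divide real_sqrt_mult field_simps S_def)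
  moreover have "besselI nu z \<ge> 0"
    using \<open>z > 0\<close> besselI_eq_bessel_series[OF nu \<open>z > 0\<close>] bessel_series_pos[OF nu, of "z^2/4"] by simp
  ultimately have "\<bar>deriv (\<lambda>s. laguerre_heat_kernel nu s x y) t\<bar> = sqrt z * besselI nu z / sqrt S * (E * \<bar>br\<bar>)"
    unfolding E_def using \<open>S > 0\<close> \<open>z > 0\<close> by (simp add: abs_mult)
  also have "\<dots> \<le> K1 * W * exp z / sqrt S * (E * \<bar>br\<bar>)"
    using bessel \<open>S > 0\<close> unfolding W_def E_def by (intro mult_right_mono divide_right_mono) auto
  also have "\<dots> = K1 * W / sqrt S * (exp (x*y/S) * E * \<bar>br\<bar>)"
    unfolding z_def S_def by simp
  also have "\<dots> \<le> K1 * W / sqrt S * (exp (- (c * (x - y)^2 / (4*S))) * (c / S) * K3)"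
    unfolding E_def br_def K3_def z_def
    using gaussian_bracket_bound[OF \<open>S > 0\<close> \<open>c \<ge> 1\<close>, of x y "z * bessel_ratio nu z" K2 nu]
      ratio x y \<open>0 \<le> K1 * W\<close> \<open>S > 0\<close> unfolding z_def S_def
    by (intro mult_left_mono) auto
  also have "\<dots> = K1 * K3 * exp (- (c * (x - y)^2 / (4*S))) * (W * (c / (S * sqrt S)))"
    using \<open>S > 0\<close> by (simp add: field_simps)
  also have "\<dots> \<le> K1 * K3 * exp (- ((x - y)^2 / (8 * t))) * (W * (c / (S * sqrt S)))"
  proof -
    have "S \<le> 2 * t * c"
      unfolding S_def c_def using sinh_le_mult_cosh[of "2*t"] t by simp
    then have "S * (x - y)^2 \<le> (2 * t * c) * (x - y)^2"
      by (intro mult_right_mono) auto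
    then have "(x - y)^2 / (8 * t) \<le> c * (x - y)^2 / (4*S)"
      using \<open>S > 0\<close> t by (simp add: field_simps mult_ac)
    then have "exp (- (c * (x - y)^2 / (4*S))) \<le> exp (- ((x - y)^2 / (8 * t)))"
      by simp
    moreover have "0 \<le> W * (c / (S * sqrt S))"
      unfolding W_def using \<open>S > 0\<close> \<open>c \<ge> 1\<close> by simp
    ultimately show ?thesis
      using \<open>0 \<le> K1 * K3\<close> by (intro mult_right_mono mult_left_mono) auto
  qed
  finally show ?thesis
    unfolding K3_def W_def c_def .
qed

theorem proposition3p5:
  fixes nu :: real
  assumes "nu > -1"
  shows "\<exists>C c. C > 0 \<and> c > 0 \<and>
    (\<forall>t x y. t > 0 \<longrightarrow> x > 0 \<longrightarrow> y > 0 \<longrightarrow>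
      \<bar>deriv (\<lambda>s. laguerre_heat_kernel nu s x y) t\<bar>
        \<le> C / t powr (3/2) * exp (- ((x - y)^2 / (c * t)))
           * (1 + sqrt t / x) powr gamma_nu nu * (1 + sqrt t / y) powr gamma_nu nu)"
proof -
  obtain Kb where Kb: "Kb > 0"
    "\<And>z. z > 0 \<Longrightarrow> sqrt z * besselI nu z \<le> Kb * (z / (1 + z)) powr (nu + 1/2) * exp z"
    using sqrt_mult_besselI_le[OF assms] by blast
  obtain Kr where Kr: "Kr > 0" "\<And>z. z > 0 \<Longrightarrow> \<bar>z * bessel_ratio nu z - z\<bar> \<le> Kr"
    using bessel_ratio_asymptotic[OF assms] by blast
  obtain Kw where Kw: "Kw > 0" "\<And>t x y. t > 0 \<Longrightarrow> x > 0 \<Longrightarrow> y > 0 \<Longrightarrow>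
      ((x*y / sinh (2*t)) / (1 + x*y / sinh (2*t))) powr (nu + 1/2)
        * (cosh (2*t) / (sinh (2*t) * sqrt (sinh (2*t))))
      \<le> Kw / t powr (3/2) * (1 + sqrt t / x) powr gamma_nu nu * (1 + sqrt t / y) powr gamma_nu nu"
    using time_weight_le[OF assms] by blast
  define Kq where "Kq = 6 + 2 * \<bar>nu + 1\<bar> + 2 * Kr"
  have "Kq > 0" unfolding Kq_def using Kr(1) by (intro add_pos_pos add_pos_nonneg) auto
  have "\<bar>deriv (\<lambda>s. laguerre_heat_kernel nu s x y) t\<bar>
      \<le> Kb * Kq * Kw / t powr (3/2) * exp (- ((x - y)^2 / (8 * t)))
        * (1 + sqrt t / x) powr gamma_nu nu * (1 + sqrt t / y) powr gamma_nu nu"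
    if t: "t > 0" and x: "x > 0" and y: "y > 0" for t x y
  proof -
    have z: "x * y / sinh (2*t) > 0" using t x y by simp
    have "\<bar>deriv (\<lambda>s. laguerre_heat_kernel nu s x y) t\<bar> \<le> Kb * Kq * exp (- ((x - y)^2 / (8 * t)))
        * ((x*y / sinh (2*t) / (1 + x*y / sinh (2*t))) powr (nu + 1/2)
          * (cosh (2*t) / (sinh (2*t) * sqrt (sinh (2*t)))))"
      unfolding Kq_def
      by (rule abs_deriv_laguerre_heat_kernel_le[OF assms t x y _ Kb(2)[OF z] Kr(2)[OF z]])
        (use Kb(1) in simp)
    also have "\<dots> \<le> Kb * Kq * exp (- ((x - y)^2 / (8 * t)))
        * (Kw / t powr (3/2) * (1 + sqrt t / x) powr gamma_nu nu * (1 + sqrt t / y) powr gamma_nu nu)"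
      using Kw(2)[OF t x y] Kb(1) \<open>Kq > 0\<close> by (intro mult_left_mono) auto
    finally show ?thesis
      by (simp add: field_simps)
  qed
  then show ?thesis
    using Kb(1) \<open>Kq > 0\<close> Kw(1) by (intro exI[of _ "Kb * Kq * Kw"] exI[of _ 8]) auto
qed

end
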